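(* Let $g:\mathbb Z\times\mathbb Z\to[0,\infty)$ be bounded by a polynomial in $|y|$ and $|z|$. Then for every $\theta\in(\underline\theta,\bar\theta)$, $$\mathbf E^\theta\big[(p(\omega_0,\omega_1)+q(\omega_0,\omega_1))\,g(\omega_0,\omega_1)\big]<\infty,$$ where $\omega_0,\omega_1$ are independent with law $\mu^\theta$.
   Context: Fix extended integers $-\infty\le\omega^{\min}\le0$, $1\le\omega^{\max}\le\infty$, $I=\{z\in\mathbb Z:\omega^{\min}-1<z<\omega^{\max}+1\}$. Rates $p,q:I\times I\to[0,\infty)$ satisfy: (R1) $p(\omega^{\min},\cdot)\equiv p(\cdot,\omega^{\max})\equiv q(\omega^{\max},\cdot)\equiv q(\cdot,\omega^{\min})\equiv0$ whenever the corresponding boundary is finite; either $p,q$ are both strictly positive in all other cases, or one is identically $0$. (R2) $p(z+1,y)\ge p(z,y)$, $p(y,z+1)\le p(y,z)$, $q(z+1,y)\le q(z,y)$, $q(y,z+1)\ge q(y,z)$ whenever $y,z,z+1\in I$. (R3) For all $x,y,z\in I$: $p(x,y)+p(y,z)+p(z,x)+q(x,y)+q(y,z)+q(z,x)=p(x,z)+p(z,y)+p(y,x)+q(x,z)+q(z,y)+q(y,x)$. (R4) There are symmetric functions $s_p,s_q$ on $I\times I$ and $f:I\to[0,\infty)$ with $f(\omega^{\min})=0$ if finite and $f(z)>0$ for $z>\omega^{\min}$, such that $p(y,z)=s_p(y,z+1)f(y)$, $q(y,z)=s_q(y+1,z)f(z)$ ($s_p,s_q$ read as $0$ if an argument exceeds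 $\omega^{\max}$). Set $f(0)!=1$, $f(z)!=\prod_{y=1}^zf(y)$ ($z>0$), $f(z)!=1/\prod_{y=z+1}^0f(y)$ ($z<0$); $\bar\theta=\lim_{z\to\infty}\log f(z)$ if $\omega^{\max}=\infty$, else $\infty$; $\underline\theta=\lim_{z\to\infty}\log f(-z)$ if $\omega^{\min}=-\infty$, else $-\infty$; assume $\underline\theta<\bar\theta$. For $\theta\in(\underline\theta,\bar\theta)$, $\mu^\theta(z)=e^{\theta z}/(Z(\theta)f(z)!)$ with $Z(\theta)=\sum_{z\in I}e^{\theta z}/f(z)!<\infty$; $\mathbf E^\theta$ is expectation under the product of $\mu^\theta$. *)

theory Defs
  imports "HOL-Analysis.Analysis"
begin

text \<open>The state space I = {z : omega_min - 1 < z < omega_max + 1}, with omega_min, omega_max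
  extended integers represented as extended reals.\<close>
definition Iset :: "ereal \<Rightarrow> ereal \<Rightarrow> int set" where
  "Iset wmin wmax = {z::int. wmin - 1 < ereal (real_of_int z) \<and> ereal (real_of_int z) < wmax + 1}"

definition ffact :: "(int \<Rightarrow> real) \<Rightarrow> int \<Rightarrow> real" where
  "ffact f z = (if z \<ge> 0 then (\<Prod>y\<in>{1..z}. f y) else 1 / (\<Prod>y\<in>{z+1..0}. f y))"

definition Zpart :: "ereal \<Rightarrow> ereal \<Rightarrow> (int \<Rightarrow> real) \<Rightarrow> real \<Rightarrow> real" where
  "Zpart wmin wmax f \<theta> = (\<Sum>\<^sub>\<infinity>z\<in>Iset wmin wmax. exp (\<theta> * real_of_int z) / ffact f z)"

definition mu :: "ereal \<Rightarrow> ereal \<Rightarrow> (int \<Rightarrow> real) \<Rightarrow> real \<Rightarrow> int \<Rightarrow> real" where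
  "mu wmin wmax f \<theta> z = exp (\<theta> * real_of_int z) / (Zpart wmin wmax f \<theta> * ffact f z)"

end

theory Submission
  imports Defs
begin

text \<open>
  Let W(z) = exp(theta z) / f(z)! be the one-site weight without its normalisation, so that
  W(z) f(z) = exp(theta) W(z - 1). Because ln f(z) tends to a limit beyond theta as z -> +oo and
  below theta as z -> -oo, the weight decays geometrically at both ends: W(y) <= K exp(-a |y|).
  The rates may grow, but only through the factor f: by (R4) and the symmetry of s_p,
  p(y, z) f(z + 1) = f(y) p(z + 1, y - 1), and together with the monotonicity (R2) this moves the
  growth of p(y, z) onto a neighbouring weight, giving W(y) W(z) p(y, z) <= c W(y') W(z') with
  |y' - y|, |z' - z| <= 1; the same holds for q with its arguments swapped. The summand is therefore
  dominated by a constant times exp(-a |y|) exp(-a |z|) times a polynomial, which is summable.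
\<close>

lemma power_one_plus_le_exp:
  fixes b :: real
  assumes "b > 0"
  shows "\<exists>M. \<forall>t\<ge>0. (1 + t) ^ k \<le> M * exp (b * t)"
proof -
  define c where "c = min 1 (b / (real k + 1))"
  have c: "c > 0" "c \<le> 1" "real k * c \<le> b"
    using assms by (auto simp: c_def min_def field_simps)
  show ?thesis
  proof (intro exI allI impI)
    fix t :: real
    assume t: "t \<ge> 0"
    have "1 + t \<le> (1 + c * t) / c" using c t by (simp add: field_simps)
    also have "\<dots> \<le> exp (c * t) / c" using c by (intro divide_right_mono) auto
    finally have "(1 + t) ^ k \<le> (exp (c * t) / c) ^ k" using t by (intro power_mono) auto
    also have "\<dots> = (1 / c) ^ k * exp (real k * c * t)"
      by (simp add: power_divide exp_of_nat_mult[symmetric] mult.assoc)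
    also have "\<dots> \<le> (1 / c) ^ k * exp (b * t)"
      using c t by (intro mult_left_mono) (auto intro: mult_right_mono)
    finally show "(1 + t) ^ k \<le> (1 / c) ^ k * exp (b * t)" .
  qed
qed

lemma mult_exp_neg_le:
  fixes K K' a b t :: real
  assumes "0 \<le> K" "K \<le> K'" "a \<le> b" "0 \<le> t"
  shows "K * exp (- b * t) \<le> K' * exp (- a * t)"
  using assms by (intro mult_mono) (auto simp: mult_right_mono)

lemma summable_on_exp_abs_int:
  fixes b :: real
  assumes "b > 0"
  shows "(\<lambda>y::int. exp (- b * \<bar>real_of_int y\<bar>)) summable_on UNIV"
proof -
  have "summable (\<lambda>n::nat. exp (- b) ^ n)"
    using assms by (intro summable_geometric) auto
  then have "summable (\<lambda>n::nat. exp (- (b * real n)))"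
    by (simp add: exp_of_nat_mult[symmetric] mult.commute)
  then have nat: "(\<lambda>n::nat. exp (- (b * real n))) summable_on UNIV"
    by (simp add: summable_on_UNIV_nonneg_real_iff)
  have "(\<lambda>y::int. exp (- b * \<bar>real_of_int y\<bar>)) summable_on (range int \<union> range (\<lambda>n. - int n))"
    by (intro summable_on_union; subst summable_on_reindex) (simp_all add: o_def nat inj_on_def)
  moreover have "UNIV = range int \<union> range (\<lambda>n. - int n)"
  proof (rule UNIV_eq_I)
    fix y :: int
    show "y \<in> range int \<union> range (\<lambda>n. - int n)"
      by (cases y rule: int_cases2) auto
  qed
  ultimately show ?thesis by simp
qed

lemma exp_neg_abs_shift_le:
  assumes "0 \<le> a" and "\<bar>y' - y\<bar> \<le> 1"
  shows "exp (- a * \<bar>real_of_int y'\<bar>) \<le> exp a * exp (- a * \<bar>real_of_int y\<bar>)"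
proof -
  have "\<bar>real_of_int y\<bar> \<le> \<bar>real_of_int y'\<bar> + 1" using assms(2) by linarith
  then have "a * \<bar>real_of_int y\<bar> \<le> a * (\<bar>real_of_int y'\<bar> + 1)"
    using assms(1) by (rule mult_left_mono)
  then have "- a * \<bar>real_of_int y'\<bar> \<le> a + - a * \<bar>real_of_int y\<bar>"
    by (simp add: algebra_simps)
  then show ?thesis by (simp flip: exp_add)
qed

lemma summable_on_exp_abs_product:
  fixes b :: real
  assumes "b > 0"
  shows "(\<lambda>(y, z). exp (- b * \<bar>real_of_int y\<bar>) * exp (- b * \<bar>real_of_int z\<bar>)) summable_on UNIV \<times> UNIV"
proof (rule summable_on_SigmaI)
  let ?E = "\<lambda>y::int. exp (- b * \<bar>real_of_int y\<bar>)"
  have E: "?E summable_on UNIV" using summable_on_exp_abs_int[OF assms] .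
  show "((\<lambda>z. case (y, z) of (y, z) \<Rightarrow> ?E y * ?E z) has_sum ?E y * infsum ?E UNIV) UNIV" for y
    using has_sum_cmult_right[OF has_sum_infsum[OF E]] by simp
  show "(\<lambda>y. ?E y * infsum ?E UNIV) summable_on UNIV" using summable_on_cmult_left[OF E] .
qed simp

lemma exp_abs_times_power_le:
  fixes a :: real
  assumes "a > 0"
  shows "\<exists>M. \<forall>y::int. exp (- a * \<bar>real_of_int y\<bar>) * (1 + \<bar>real_of_int y\<bar>) ^ k
    \<le> M * exp (- (a / 2) * \<bar>real_of_int y\<bar>)"
proof -
  obtain M where M: "\<And>t. t \<ge> 0 \<Longrightarrow> (1 + t) ^ k \<le> M * exp (a / 2 * t)"
    using power_one_plus_le_exp[of "a / 2" k] assms by auto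
  have "exp (- a * \<bar>real_of_int y\<bar>) * (1 + \<bar>real_of_int y\<bar>) ^ k
      \<le> exp (- a * \<bar>real_of_int y\<bar>) * (M * exp (a / 2 * \<bar>real_of_int y\<bar>))" for y :: int
    by (intro mult_left_mono M) auto
  also have "\<dots> y = M * exp (- (a / 2) * \<bar>real_of_int y\<bar>)" for y :: int
    by (simp add: mult_ac flip: exp_add)
  finally show ?thesis by blast
qed

lemma summable_on_exp_decay_times_poly:
  fixes h g :: "int \<Rightarrow> int \<Rightarrow> real"
  assumes "a > 0"
    and h: "\<And>y z. y \<in> A \<Longrightarrow> z \<in> B \<Longrightarrow>
      0 \<le> h y z \<and> h y z \<le> C * (exp (- a * \<bar>real_of_int y\<bar>) * exp (- a * \<bar>real_of_int z\<bar>))"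
    and g_nonneg: "\<And>y z. 0 \<le> g y z"
    and g_poly: "\<And>y z. g y z \<le> Cg * (1 + \<bar>real_of_int y\<bar> + \<bar>real_of_int z\<bar>) ^ k"
  shows "(\<lambda>(y, z). h y z * g y z) summable_on A \<times> B"
proof -
  define E where "E b y = exp (- b * \<bar>real_of_int y\<bar>)" for b y
  define u where "u y = (1 + \<bar>real_of_int y\<bar>) ^ k" for y :: int
  obtain M where M: "\<And>y. E a y * u y \<le> M * E (a / 2) y"
    using exp_abs_times_power_le[OF \<open>a > 0\<close>, of k] by (auto simp: E_def u_def)
  have Eu_nonneg: "0 \<le> E a y * u y" for y
    by (simp add: E_def u_def)
  have bound: "h y z * g y z \<le> (C * Cg * M * M) * (E (a / 2) y * E (a / 2) z)"
    if "y \<in> A" "z \<in> B" for y z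
  proof -
    have hb: "0 \<le> h y z" "h y z \<le> C * (E a y * E a z)" using h[OF that] by (auto simp: E_def)
    have "0 < E a y * E a z" by (simp add: E_def)
    with order_trans[OF hb] have "0 \<le> C" by (simp add: zero_le_mult_iff)
    have "0 < (1 + \<bar>real_of_int y\<bar> + \<bar>real_of_int z\<bar>) ^ k" by simp
    with order_trans[OF g_nonneg g_poly, of y z] have "0 \<le> Cg" by (simp add: zero_le_mult_iff)
    have "1 + \<bar>real_of_int y\<bar> + \<bar>real_of_int z\<bar> \<le> (1 + \<bar>real_of_int y\<bar>) * (1 + \<bar>real_of_int z\<bar>)"
      by (simp add: algebra_simps)
    then have "(1 + \<bar>real_of_int y\<bar> + \<bar>real_of_int z\<bar>) ^ k \<le> u y * u z"
      unfolding u_def power_mult_distrib[symmetric] by (intro power_mono) auto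
    with \<open>0 \<le> Cg\<close> have gb: "g y z \<le> Cg * (u y * u z)"
      using g_poly[of y z] by (meson mult_left_mono order_trans)
    have "h y z * g y z \<le> (C * (E a y * E a z)) * (Cg * (u y * u z))"
      using hb gb g_nonneg[of y z] by (intro mult_mono) auto
    also have "\<dots> = (C * Cg) * ((E a y * u y) * (E a z * u z))" by (simp add: mult_ac)
    also have "\<dots> \<le> (C * Cg) * ((M * E (a / 2) y) * (M * E (a / 2) z))"
      using \<open>0 \<le> C\<close> \<open>0 \<le> Cg\<close>
      by (intro mult_left_mono mult_mono[OF M M order_trans[OF Eu_nonneg M] Eu_nonneg]) auto
    finally show ?thesis by (simp add: mult_ac)
  qed
  show ?thesis
  proof (rule summable_on_comparison_test)
    show "(\<lambda>x. (C * Cg * M * M) * (case x of (y, z) \<Rightarrow> E (a / 2) y * E (a / 2) z))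
        summable_on A \<times> B"
      using summable_on_exp_abs_product[of "a / 2"] \<open>a > 0\<close> unfolding E_def
      by (intro summable_on_subset[OF summable_on_cmult_right]) auto
  qed (use bound h g_nonneg in auto)
qed

lemma geometric_bound_of_ratio:
  fixes u :: "nat \<Rightarrow> real"
  assumes down: "\<And>n. D (Suc n) \<Longrightarrow> D n"
    and ratio: "eventually (\<lambda>n. D (Suc n) \<longrightarrow> u (Suc n) \<le> exp (- a) * u n) sequentially"
  shows "\<exists>K\<ge>0. \<forall>n. D n \<longrightarrow> u n \<le> K * exp (- a * real n)"
proof -
  obtain N where N: "\<And>n. n \<ge> N \<Longrightarrow> D (Suc n) \<Longrightarrow> u (Suc n) \<le> exp (- a) * u n"
    using ratio by (auto simp: eventually_sequentially)
  define v where "v n = u n * exp (a * real n)" for n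
  define K where "K = (\<Sum>n\<le>N. \<bar>v n\<bar>)"
  have tail: "D n \<longrightarrow> v n \<le> v N" if "n \<ge> N" for n
    using that
  proof (induction n rule: dec_induct)
    case (step n)
    have "v (Suc n) = exp a * u (Suc n) * exp (a * real n)"
      by (simp add: v_def algebra_simps flip: exp_add)
    also have "\<dots> \<le> exp a * (exp (- a) * u n) * exp (a * real n)" if "D (Suc n)"
      using N[OF step.hyps(1) that] by (intro mult_right_mono mult_left_mono) auto
    also have "\<dots> = v n" by (simp add: v_def flip: exp_add)
    finally show ?case using step.IH down by (meson order_trans)
  qed simp
  have "v n \<le> K" if "D n" for n
  proof -
    have "\<bar>v (min n N)\<bar> \<le> K"
      unfolding K_def by (rule member_le_sum) auto
    moreover have "v n \<le> v (min n N)" using tail[of n] that by (cases "n \<le> N") auto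
    ultimately show ?thesis by linarith
  qed
  then have "u n \<le> K * exp (- a * real n)" if "D n" for n
    using that by (simp add: v_def field_simps exp_minus)
  moreover have "K \<ge> 0" by (simp add: K_def sum_nonneg)
  ultimately show ?thesis by blast
qed

lemma Iset_convex:
  assumes "a \<in> Iset wmin wmax" "b \<in> Iset wmin wmax" "a \<le> c" "c \<le> b"
  shows "c \<in> Iset wmin wmax"
proof -
  have "ereal (real_of_int a) \<le> ereal (real_of_int c)" "ereal (real_of_int c) \<le> ereal (real_of_int b)"
    using assms(3,4) by auto
  with assms(1,2) show ?thesis
    unfolding Iset_def mem_Collect_eq by (meson less_le_trans le_less_trans)
qed

lemma Iset_le_wmax:
  assumes "wmax = \<infinity> \<or> (\<exists>m::int. wmax = ereal (real_of_int m))" and "z \<in> Iset wmin wmax"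
  shows "ereal (real_of_int z) \<le> wmax"
  using assms by (auto simp: Iset_def)

lemma wmin_less_of_pred_in_Iset:
  assumes "z - 1 \<in> Iset wmin wmax"
  shows "wmin < ereal (real_of_int z)"
  using assms by (cases wmin) (auto simp: Iset_def one_ereal_def)

lemma ffact_pos:
  assumes "\<And>y. min (z + 1) 1 \<le> y \<Longrightarrow> y \<le> max z 0 \<Longrightarrow> 0 < f y"
  shows "0 < ffact f z"
  using assms by (auto simp: ffact_def intro!: prod_pos)

lemma ffact_pred:
  assumes "f y \<noteq> 0"
  shows "ffact f y = ffact f (y - 1) * f y"
proof (cases "y \<ge> 1")
  case True
  then have "{1..y} = insert y {1..y - 1}" by auto
  with True show ?thesis by (simp add: ffact_def)
next
  case False
  then have "{y..0} = insert y {y + 1..0}" by auto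
  with False assms show ?thesis by (simp add: ffact_def)
qed

definition weight :: "(int \<Rightarrow> real) \<Rightarrow> real \<Rightarrow> int \<Rightarrow> real" where
  "weight f \<theta> z = exp (\<theta> * real_of_int z) / ffact f z"

lemma mu_eq_weight: "mu wmin wmax f \<theta> z = weight f \<theta> z / Zpart wmin wmax f \<theta>"
  by (simp add: mu_def weight_def mult.commute)

lemma weight_pred:
  assumes "f y \<noteq> 0"
  shows "weight f \<theta> y * f y = exp \<theta> * weight f \<theta> (y - 1)"
  using assms by (simp add: weight_def ffact_pred[of f y, OF assms] algebra_simps flip: exp_add)

locale site_space =
  fixes wmin wmax :: ereal and f :: "int \<Rightarrow> real"
  assumes wmin_le: "wmin \<le> 0" and wmax_ge: "1 \<le> wmax"
    and f_pos: "\<forall>z\<in>Iset wmin wmax. ereal (real_of_int z) > wmin \<longrightarrow> f z > 0"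
begin

abbreviation I :: "int set" where "I \<equiv> Iset wmin wmax"

lemma zero_in_I: "0 \<in> I" and one_in_I: "1 \<in> I"
  using wmin_le wmax_ge by (cases wmin; cases wmax; auto simp: Iset_def one_ereal_def)+

lemma f_pos_of_pred: "z \<in> I \<Longrightarrow> z - 1 \<in> I \<Longrightarrow> 0 < f z"
  using f_pos wmin_less_of_pred_in_Iset by blast

lemma ffact_pos_I:
  assumes z: "z \<in> I"
  shows "0 < ffact f z"
proof (rule ffact_pos, rule f_pos_of_pred)
  have between: "c \<in> I" if "min 0 z \<le> c" "c \<le> max 0 z" for c
    using Iset_convex[OF zero_in_I z] Iset_convex[OF z zero_in_I] that by (cases "0 \<le> z") auto
  fix y assume "min (z + 1) 1 \<le> y" "y \<le> max z 0"
  then show "y \<in> I" "y - 1 \<in> I" by (auto intro!: between)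
qed

lemma weight_pos: "z \<in> I \<Longrightarrow> 0 < weight f \<theta> z"
  by (simp add: weight_def ffact_pos_I)

lemma step_mono_on_I:
  fixes h :: "int \<Rightarrow> 'a::preorder"
  assumes step: "\<And>z. z \<in> I \<Longrightarrow> z + 1 \<in> I \<Longrightarrow> h z \<le> h (z + 1)"
    and "a \<in> I" "b \<in> I" "a \<le> b"
  shows "h a \<le> h b"
  using \<open>a \<le> b\<close> \<open>b \<in> I\<close>
proof (induction b rule: int_ge_induct)
  case (step i)
  then have "i \<in> I" using Iset_convex[OF \<open>a \<in> I\<close>, of "i + 1" i] by auto
  with step.IH step.prems assms(1)[of i] show ?case by (meson order_trans)
qed simp

lemma weight_pred_I: "y \<in> I \<Longrightarrow> y - 1 \<in> I \<Longrightarrow> weight f \<theta> y * f y = exp \<theta> * weight f \<theta> (y - 1)"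
  using weight_pred f_pos_of_pred by (metis less_irrefl)

lemma weight_decay_at_top:
  assumes large: "eventually (\<lambda>n. int n \<in> I \<longrightarrow> exp c \<le> f (int n)) sequentially"
  shows "\<exists>K\<ge>0. \<forall>n. int n \<in> I \<longrightarrow> weight f \<theta> (int n) \<le> K * exp (- (c - \<theta>) * real n)"
proof (rule geometric_bound_of_ratio)
  show "int n \<in> I" if "int (Suc n) \<in> I" for n
    using Iset_convex[OF zero_in_I that] by simp
  obtain N where N: "\<And>n. n \<ge> N \<Longrightarrow> int n \<in> I \<Longrightarrow> exp c \<le> f (int n)"
    using large by (auto simp: eventually_sequentially)
  have "weight f \<theta> (int (Suc n)) \<le> exp (- (c - \<theta>)) * weight f \<theta> (int n)"
    if "n \<ge> N" "int (Suc n) \<in> I" for n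
  proof -
    have "weight f \<theta> (int (Suc n)) * exp c \<le> weight f \<theta> (int (Suc n)) * f (int (Suc n))"
      using N[of "Suc n"] that weight_pos[of "int (Suc n)" \<theta>] by (intro mult_left_mono) auto
    also have "\<dots> = exp \<theta> * weight f \<theta> (int n)"
      using weight_pred_I[of "int (Suc n)"] that \<open>\<And>n. int (Suc n) \<in> I \<Longrightarrow> int n \<in> I\<close> by simp
    finally show ?thesis by (simp add: exp_diff field_simps)
  qed
  then show "eventually (\<lambda>n. int (Suc n) \<in> I \<longrightarrow>
      weight f \<theta> (int (Suc n)) \<le> exp (- (c - \<theta>)) * weight f \<theta> (int n)) sequentially"
    unfolding eventually_sequentially by blast
qed

lemma weight_decay_at_bot:
  assumes small: "eventually (\<lambda>n. - int n \<in> I \<longrightarrow> f (- int n) \<le> exp c) sequentially"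
  shows "\<exists>K\<ge>0. \<forall>n. - int n \<in> I \<longrightarrow> weight f \<theta> (- int n) \<le> K * exp (- (\<theta> - c) * real n)"
proof (rule geometric_bound_of_ratio)
  show "- int n \<in> I" if "- int (Suc n) \<in> I" for n
    using Iset_convex[OF that zero_in_I] by simp
  obtain N where N: "\<And>n. n \<ge> N \<Longrightarrow> - int n \<in> I \<Longrightarrow> f (- int n) \<le> exp c"
    using small by (auto simp: eventually_sequentially)
  have "weight f \<theta> (- int (Suc n)) \<le> exp (- (\<theta> - c)) * weight f \<theta> (- int n)"
    if "n \<ge> N" "- int (Suc n) \<in> I" for n
  proof -
    have pred: "- int n \<in> I" "- int n - 1 \<in> I"
      using that \<open>\<And>n. - int (Suc n) \<in> I \<Longrightarrow> - int n \<in> I\<close>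
      by (auto simp: minus_diff_commute)
    have "exp \<theta> * weight f \<theta> (- int (Suc n)) = weight f \<theta> (- int n) * f (- int n)"
      using weight_pred_I[OF pred, of \<theta>] by (simp add: minus_diff_commute)
    also have "\<dots> \<le> weight f \<theta> (- int n) * exp c"
      using N[of n] that pred weight_pos[of "- int n" \<theta>] by (intro mult_left_mono) auto
    finally show ?thesis by (simp add: exp_diff field_simps)
  qed
  then show "eventually (\<lambda>n. - int (Suc n) \<in> I \<longrightarrow>
      weight f \<theta> (- int (Suc n)) \<le> exp (- (\<theta> - c)) * weight f \<theta> (- int n)) sequentially"
    unfolding eventually_sequentially by blast
qed

lemma eventually_exp_le_f_at_top:
  assumes lim: "if wmax = \<infinity> then (\<lambda>n::nat. ereal (ln (f (int n)))) \<longlonglongrightarrow> thup else thup = \<infinity>"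
    and "ereal \<theta> < thup"
  shows "\<exists>c>\<theta>. eventually (\<lambda>n. int n \<in> I \<longrightarrow> exp c \<le> f (int n)) sequentially"
proof (cases "wmax = \<infinity>")
  case True
  obtain c where c: "ereal \<theta> < ereal c" "ereal c < thup"
    using ereal_dense2[OF \<open>ereal \<theta> < thup\<close>] by blast
  have "(\<lambda>n. ereal (ln (f (int n)))) \<longlonglongrightarrow> thup" using lim True by simp
  then have "eventually (\<lambda>n. ereal c < ereal (ln (f (int n)))) sequentially"
    using c(2) by (rule order_tendstoD(1))
  moreover have "eventually (\<lambda>n. 1 \<le> n) sequentially"
    by (rule eventually_ge_at_top)
  ultimately have "eventually (\<lambda>n. int n \<in> I \<longrightarrow> exp c \<le> f (int n)) sequentially"
  proof eventually_elim
    case (elim n)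
    show ?case
    proof
      assume "int n \<in> I"
      moreover have "int n - 1 \<in> I"
        using Iset_convex[OF zero_in_I \<open>int n \<in> I\<close>] elim(2) by simp
      ultimately have "0 < f (int n)" by (rule f_pos_of_pred)
      with elim(1) show "exp c \<le> f (int n)" by (simp add: ln_ge_iff[symmetric])
    qed
  qed
  with c(1) show ?thesis by auto
next
  case False
  then obtain r where r: "wmax = ereal r" using wmax_ge by (cases wmax) auto
  obtain N :: nat where "r + 1 < real N" using reals_Archimedean2 by blast
  then have "int n \<notin> I" if "n \<ge> N" for n
    using of_nat_mono[OF that] by (auto simp: Iset_def r)
  then have "eventually (\<lambda>n. int n \<notin> I) sequentially"
    unfolding eventually_sequentially by blast
  then show ?thesis by (auto elim: eventually_mono intro: exI[of _ "\<theta> + 1"])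
qed

lemma eventually_f_le_exp_at_bot:
  assumes lim: "if wmin = -\<infinity> then (\<lambda>n::nat. ereal (ln (f (- int n)))) \<longlonglongrightarrow> thlow else thlow = -\<infinity>"
    and "thlow < ereal \<theta>"
  shows "\<exists>c<\<theta>. eventually (\<lambda>n. - int n \<in> I \<longrightarrow> f (- int n) \<le> exp c) sequentially"
proof (cases "wmin = -\<infinity>")
  case True
  obtain c where c: "thlow < ereal c" "ereal c < ereal \<theta>"
    using ereal_dense2[OF \<open>thlow < ereal \<theta>\<close>] by blast
  have "(\<lambda>n. ereal (ln (f (- int n)))) \<longlonglongrightarrow> thlow" using lim True by simp
  then have "eventually (\<lambda>n. ereal (ln (f (- int n))) < ereal c) sequentially"
    using c(1) by (rule order_tendstoD(2))
  then have "eventually (\<lambda>n. - int n \<in> I \<longrightarrow> f (- int n) \<le> exp c) sequentially"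
  proof eventually_elim
    case (elim n)
    show ?case
    proof
      assume "- int n \<in> I"
      with True have "0 < f (- int n)" using f_pos by simp
      with elim show "f (- int n) \<le> exp c" by (simp add: ln_le_cancel_iff[symmetric])
    qed
  qed
  with c(2) show ?thesis by auto
next
  case False
  then obtain r where r: "wmin = ereal r" using wmin_le by (cases wmin) auto
  obtain N :: nat where "1 - r < real N" using reals_Archimedean2 by blast
  then have "- int n \<notin> I" if "n \<ge> N" for n
    using of_nat_mono[OF that] by (auto simp: Iset_def r one_ereal_def)
  then have "eventually (\<lambda>n. - int n \<notin> I) sequentially"
    unfolding eventually_sequentially by blast
  then show ?thesis by (auto elim: eventually_mono intro: exI[of _ "\<theta> - 1"])
qed

lemma weight_exp_bound:
  assumes "\<exists>c>\<theta>. eventually (\<lambda>n. int n \<in> I \<longrightarrow> exp c \<le> f (int n)) sequentially"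
    and "\<exists>c<\<theta>. eventually (\<lambda>n. - int n \<in> I \<longrightarrow> f (- int n) \<le> exp c) sequentially"
  shows "\<exists>a>0. \<exists>K. \<forall>y\<in>I. weight f \<theta> y \<le> K * exp (- a * \<bar>real_of_int y\<bar>)"
proof -
  obtain c1 K1 where c1: "\<theta> < c1" "K1 \<ge> 0"
    and K1: "\<And>n. int n \<in> I \<Longrightarrow> weight f \<theta> (int n) \<le> K1 * exp (- (c1 - \<theta>) * real n)"
    using assms(1) weight_decay_at_top by blast
  obtain c2 K2 where c2: "c2 < \<theta>" "K2 \<ge> 0"
    and K2: "\<And>n. - int n \<in> I \<Longrightarrow> weight f \<theta> (- int n) \<le> K2 * exp (- (\<theta> - c2) * real n)"
    using assms(2) weight_decay_at_bot by blast
  define a where "a = min (c1 - \<theta>) (\<theta> - c2)"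
  have "weight f \<theta> y \<le> max K1 K2 * exp (- a * \<bar>real_of_int y\<bar>)" if "y \<in> I" for y
  proof (cases "0 \<le> y")
    case True
    then have "weight f \<theta> y \<le> K1 * exp (- (c1 - \<theta>) * \<bar>real_of_int y\<bar>)"
      using K1[of "nat y"] that by simp
    also have "\<dots> \<le> max K1 K2 * exp (- a * \<bar>real_of_int y\<bar>)"
      using c1 by (intro mult_exp_neg_le) (auto simp: a_def)
    finally show ?thesis .
  next
    case False
    then have "weight f \<theta> y \<le> K2 * exp (- (\<theta> - c2) * \<bar>real_of_int y\<bar>)"
      using K2[of "nat (- y)"] that by simp
    also have "\<dots> \<le> max K1 K2 * exp (- a * \<bar>real_of_int y\<bar>)"
      using c2 by (intro mult_exp_neg_le) (auto simp: a_def)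
    finally show ?thesis .
  qed
  moreover have "a > 0" using c1 c2 by (simp add: a_def)
  ultimately show ?thesis by blast
qed

end

text \<open>
  p satisfies these axioms as P = p, and q as P y z = q z y. The exchange identity is what (R4)
  yields: both sides equal s(y, z + 1) f y f (z + 1) for the symmetric s.
\<close>

locale exchange_rate = site_space +
  fixes P :: "int \<Rightarrow> int \<Rightarrow> real"
  assumes P_nonneg: "\<And>y z. y \<in> I \<Longrightarrow> z \<in> I \<Longrightarrow> 0 \<le> P y z"
    and P_step_left: "\<And>y z. y \<in> I \<Longrightarrow> z \<in> I \<Longrightarrow> z + 1 \<in> I \<Longrightarrow> P z y \<le> P (z + 1) y"
    and P_step_right: "\<And>y z. y \<in> I \<Longrightarrow> z \<in> I \<Longrightarrow> z + 1 \<in> I \<Longrightarrow> P y (z + 1) \<le> P y z"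
    and P_exchange: "\<And>y z. y \<in> I \<Longrightarrow> z \<in> I \<Longrightarrow> y - 1 \<in> I \<Longrightarrow> z + 1 \<in> I \<Longrightarrow>
      P y z * f (z + 1) = f y * P (z + 1) (y - 1)"
begin

lemma P_mono_left: "a \<in> I \<Longrightarrow> b \<in> I \<Longrightarrow> y \<in> I \<Longrightarrow> a \<le> b \<Longrightarrow> P a y \<le> P b y"
  by (rule step_mono_on_I[where h = "\<lambda>a. P a y"]) (auto intro: P_step_left)

lemma P_antimono_right: "a \<in> I \<Longrightarrow> b \<in> I \<Longrightarrow> y \<in> I \<Longrightarrow> a \<le> b \<Longrightarrow> P y b \<le> P y a"
  using step_mono_on_I[where h = "\<lambda>b. - P y b"] P_step_right by force

text \<open>
  Quadrants around the corner (y, z) = (1, 0): in the first P is bounded by its value at the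
  corner; in the others the exchange identity trades the rate for a factor f, which the weight
  step W(y) f(y) = exp(theta) W(y - 1) absorbs.
\<close>

lemma weights_rate_le_corner:
  assumes y: "y \<in> I" and z: "z \<in> I" and "y \<le> 1" "0 \<le> z"
  shows "weight f \<theta> y * weight f \<theta> z * P y z \<le> P 1 0 * (weight f \<theta> y * weight f \<theta> z)"
proof -
  have "P y z \<le> P 1 0"
    using P_antimono_right[OF zero_in_I z y \<open>0 \<le> z\<close>] P_mono_left[OF y one_in_I zero_in_I \<open>y \<le> 1\<close>]
    by linarith
  then show ?thesis
    using weight_pos[OF y, of \<theta>] weight_pos[OF z, of \<theta>] by (simp add: mult.commute mult_right_mono)
qed

lemma weights_rate_le_shift_left:
  assumes y: "y \<in> I" and z: "z \<in> I" and "1 < y" "0 \<le> z"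
  shows "weight f \<theta> y * weight f \<theta> z * P y z
    \<le> exp \<theta> * P 1 0 / f 1 * (weight f \<theta> (y - 1) * weight f \<theta> z)"
proof -
  have y1: "y - 1 \<in> I" using Iset_convex[OF one_in_I y] \<open>1 < y\<close> by simp
  have f1: "0 < f 1" using f_pos_of_pred[OF one_in_I] zero_in_I by simp
  have "P y z * f 1 \<le> P y 0 * f 1"
    using P_antimono_right[OF zero_in_I z y \<open>0 \<le> z\<close>] f1 by simp
  also have "\<dots> = f y * P 1 (y - 1)" using P_exchange[OF y zero_in_I y1] one_in_I by simp
  also have "\<dots> \<le> f y * P 1 0"
    using P_antimono_right[OF zero_in_I y1 one_in_I] \<open>1 < y\<close> f_pos_of_pred[OF y y1]
    by (intro mult_left_mono) auto
  finally have "P y z \<le> f y * P 1 0 / f 1" using f1 by (simp add: field_simps)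
  then have "P y z * (weight f \<theta> y * weight f \<theta> z) \<le> f y * P 1 0 / f 1 * (weight f \<theta> y * weight f \<theta> z)"
    using weight_pos[OF y, of \<theta>] weight_pos[OF z, of \<theta>] by (intro mult_right_mono) auto
  then have "weight f \<theta> y * weight f \<theta> z * P y z \<le> weight f \<theta> y * f y * weight f \<theta> z * P 1 0 / f 1"
    by (simp add: mult_ac)
  also have "\<dots> = exp \<theta> * P 1 0 / f 1 * (weight f \<theta> (y - 1) * weight f \<theta> z)"
    using weight_pred_I[OF y y1, of \<theta>] by simp
  finally show ?thesis .
qed

lemma weights_rate_le_shift_both:
  assumes y: "y \<in> I" and z: "z \<in> I" and "1 \<le> y" "z < 0"
  shows "weight f \<theta> y * weight f \<theta> z * P y z \<le> P 0 0 * (weight f \<theta> (y - 1) * weight f \<theta> (z + 1))"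
proof -
  have y1: "y - 1 \<in> I" using Iset_convex[OF zero_in_I y] \<open>1 \<le> y\<close> by simp
  have z1: "z + 1 \<in> I" using Iset_convex[OF z zero_in_I] \<open>z < 0\<close> by simp
  have "P y z * f (z + 1) = f y * P (z + 1) (y - 1)" by (rule P_exchange[OF y z y1 z1])
  also have "\<dots> \<le> f y * P 0 0"
    using P_mono_left[OF z1 zero_in_I y1] P_antimono_right[OF zero_in_I y1 zero_in_I]
      \<open>1 \<le> y\<close> \<open>z < 0\<close> f_pos_of_pred[OF y y1]
    by (intro mult_left_mono) auto
  finally have rate: "P y z * f (z + 1) \<le> f y * P 0 0" .
  have "exp \<theta> * (weight f \<theta> y * weight f \<theta> z * P y z)
      = weight f \<theta> y * weight f \<theta> (z + 1) * (P y z * f (z + 1))"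
    using weight_pred_I[OF z1, of \<theta>] z by (simp add: algebra_simps)
  also have "\<dots> \<le> weight f \<theta> y * weight f \<theta> (z + 1) * (f y * P 0 0)"
    using rate weight_pos[OF y, of \<theta>] weight_pos[OF z1, of \<theta>] by (intro mult_left_mono) auto
  also have "\<dots> = exp \<theta> * (P 0 0 * (weight f \<theta> (y - 1) * weight f \<theta> (z + 1)))"
    using weight_pred_I[OF y y1, of \<theta>] by (simp add: algebra_simps)
  finally show ?thesis by simp
qed

lemma weights_rate_le_shift_right:
  assumes y: "y \<in> I" and z: "z \<in> I" and "y \<le> 0" "z < 0"
  shows "weight f \<theta> y * weight f \<theta> z * P y z
    \<le> exp (- \<theta>) * f 0 * P 0 (- 1) * (weight f \<theta> y * weight f \<theta> (z + 1))"
proof -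
  have z1: "z + 1 \<in> I" and m1: "- 1 \<in> I"
    using Iset_convex[OF z zero_in_I] \<open>z < 0\<close> by simp_all
  have "P y z * f (z + 1) \<le> P 0 z * f (z + 1)"
    using P_mono_left[OF y zero_in_I z \<open>y \<le> 0\<close>] f_pos_of_pred[OF z1] z by simp
  also have "\<dots> = f 0 * P (z + 1) (- 1)" using P_exchange[OF zero_in_I z _ z1] m1 by simp
  also have "\<dots> \<le> f 0 * P 0 (- 1)"
    using P_mono_left[OF z1 zero_in_I m1] \<open>z < 0\<close> f_pos_of_pred[OF zero_in_I] m1
    by (intro mult_left_mono) auto
  finally have rate: "P y z * f (z + 1) \<le> f 0 * P 0 (- 1)" .
  have "exp \<theta> * (weight f \<theta> y * weight f \<theta> z * P y z)
      = weight f \<theta> y * weight f \<theta> (z + 1) * (P y z * f (z + 1))"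
    using weight_pred_I[OF z1, of \<theta>] z by (simp add: algebra_simps)
  also have "\<dots> \<le> weight f \<theta> y * weight f \<theta> (z + 1) * (f 0 * P 0 (- 1))"
    using rate weight_pos[OF y, of \<theta>] weight_pos[OF z1, of \<theta>] by (intro mult_left_mono) auto
  finally show ?thesis by (simp add: exp_minus field_simps)
qed

lemma weights_rate_le_shifted:
  obtains c where "0 \<le> c"
    and "\<And>y z. y \<in> I \<Longrightarrow> z \<in> I \<Longrightarrow> \<exists>y'\<in>I. \<exists>z'\<in>I. \<bar>y' - y\<bar> \<le> 1 \<and> \<bar>z' - z\<bar> \<le> 1 \<and>
      weight f \<theta> y * weight f \<theta> z * P y z \<le> c * (weight f \<theta> y' * weight f \<theta> z')"
proof -
  let ?W = "weight f \<theta>"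
  define c where "c = max (max (P 1 0) (exp \<theta> * P 1 0 / f 1)) (max (P 0 0) (exp (- \<theta>) * f 0 * P 0 (- 1)))"
  have witness: "\<exists>y'\<in>I. \<exists>z'\<in>I. \<bar>y' - y\<bar> \<le> 1 \<and> \<bar>z' - z\<bar> \<le> 1 \<and> ?W y * ?W z * P y z \<le> c * (?W y' * ?W z')"
    if "y' \<in> I" "z' \<in> I" "\<bar>y' - y\<bar> \<le> 1" "\<bar>z' - z\<bar> \<le> 1" "b \<le> c"
      and "?W y * ?W z * P y z \<le> b * (?W y' * ?W z')" for y z y' z' b
    using that order_trans[OF _ mult_right_mono[OF \<open>b \<le> c\<close>]] weight_pos
    by (meson less_imp_le mult_nonneg_nonneg)
  have "\<exists>y'\<in>I. \<exists>z'\<in>I. \<bar>y' - y\<bar> \<le> 1 \<and> \<bar>z' - z\<bar> \<le> 1 \<and> ?W y * ?W z * P y z \<le> c * (?W y' * ?W z')"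
    if y: "y \<in> I" and z: "z \<in> I" for y z
  proof -
    consider "y \<le> 1" "0 \<le> z" | "1 < y" "0 \<le> z" | "1 \<le> y" "z < 0" | "y \<le> 0" "z < 0" by linarith
    then show ?thesis
    proof cases
      case 1
      then show ?thesis using weights_rate_le_corner[OF y z, of \<theta>]
        by (intro witness[where y'=y and z'=z and b="P 1 0"]) (simp_all add: y z c_def)
    next
      case 2
      then have "y - 1 \<in> I" using Iset_convex[OF one_in_I y] by simp
      with 2 show ?thesis using weights_rate_le_shift_left[OF y z, of \<theta>]
        by (intro witness[where y'="y - 1" and z'=z and b="exp \<theta> * P 1 0 / f 1"]) (simp_all add: z c_def)
    next
      case 3
      then have "y - 1 \<in> I" "z + 1 \<in> I" using Iset_convex[OF zero_in_I y] Iset_convex[OF z zero_in_I] by simp_all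
      with 3 show ?thesis using weights_rate_le_shift_both[OF y z, of \<theta>]
        by (intro witness[where y'="y - 1" and z'="z + 1" and b="P 0 0"]) (simp_all add: c_def)
    next
      case 4
      then have "z + 1 \<in> I" using Iset_convex[OF z zero_in_I] by simp
      with 4 show ?thesis using weights_rate_le_shift_right[OF y z, of \<theta>]
        by (intro witness[where y'=y and z'="z + 1" and b="exp (- \<theta>) * f 0 * P 0 (- 1)"])
          (simp_all add: y c_def)
    qed
  qed
  moreover have "0 \<le> c" using P_nonneg[OF one_in_I zero_in_I] by (simp add: c_def le_max_iff_disj)
  ultimately show ?thesis using that by blast
qed

lemma weights_rate_exp_bound:
  assumes "0 \<le> a" and W: "\<forall>y\<in>I. weight f \<theta> y \<le> K * exp (- a * \<bar>real_of_int y\<bar>)"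
  shows "\<exists>C. \<forall>y\<in>I. \<forall>z\<in>I. weight f \<theta> y * weight f \<theta> z * P y z
    \<le> C * (exp (- a * \<bar>real_of_int y\<bar>) * exp (- a * \<bar>real_of_int z\<bar>))"
proof -
  let ?W = "weight f \<theta>" and ?E = "\<lambda>y. exp (- a * \<bar>real_of_int y\<bar>)"
  obtain c where "0 \<le> c" and shifted: "\<And>y z. y \<in> I \<Longrightarrow> z \<in> I \<Longrightarrow> \<exists>y'\<in>I. \<exists>z'\<in>I.
      \<bar>y' - y\<bar> \<le> 1 \<and> \<bar>z' - z\<bar> \<le> 1 \<and> ?W y * ?W z * P y z \<le> c * (?W y' * ?W z')"
    using weights_rate_le_shifted[where \<theta> = \<theta>] by blast
  have "?W 0 \<le> K" using W zero_in_I by force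
  then have "0 \<le> K" using weight_pos[OF zero_in_I, of \<theta>] by linarith
  have W_shift: "?W y' \<le> K * exp a * ?E y" if "y' \<in> I" "\<bar>y' - y\<bar> \<le> 1" for y y'
  proof -
    have "?W y' \<le> K * ?E y'" using W that(1) by blast
    also have "\<dots> \<le> K * (exp a * ?E y)"
      using exp_neg_abs_shift_le[OF \<open>0 \<le> a\<close> that(2)] \<open>0 \<le> K\<close> by (rule mult_left_mono)
    finally show ?thesis by (simp only: mult.assoc)
  qed
  have "?W y * ?W z * P y z \<le> (c * (K * exp a) ^ 2) * (?E y * ?E z)" if y: "y \<in> I" and z: "z \<in> I" for y z
  proof -
    obtain y' z' where "y' \<in> I" "z' \<in> I" "\<bar>y' - y\<bar> \<le> 1" "\<bar>z' - z\<bar> \<le> 1"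
      and le: "?W y * ?W z * P y z \<le> c * (?W y' * ?W z')"
      using shifted[OF y z] by blast
    note le
    also have "c * (?W y' * ?W z') \<le> c * ((K * exp a * ?E y) * (K * exp a * ?E z))"
      using W_shift[OF \<open>y' \<in> I\<close> \<open>\<bar>y' - y\<bar> \<le> 1\<close>] W_shift[OF \<open>z' \<in> I\<close> \<open>\<bar>z' - z\<bar> \<le> 1\<close>]
        weight_pos[OF \<open>z' \<in> I\<close>, of \<theta>] \<open>0 \<le> K\<close> \<open>0 \<le> c\<close>
      by (intro mult_left_mono mult_mono) auto
    also have "\<dots> = (c * (K * exp a) ^ 2) * (?E y * ?E z)"
      by (simp add: power2_eq_square mult_ac)
    finally show ?thesis .
  qed
  then show ?thesis by blast
qed

end

context site_space
begin

lemma summable_on_weighted_rates: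
  assumes P: "exchange_rate wmin wmax f P" and Q: "exchange_rate wmin wmax f Q"
    and "\<exists>c>\<theta>. eventually (\<lambda>n. int n \<in> I \<longrightarrow> exp c \<le> f (int n)) sequentially"
    and "\<exists>c<\<theta>. eventually (\<lambda>n. - int n \<in> I \<longrightarrow> f (- int n) \<le> exp c) sequentially"
    and g_nonneg: "\<And>y z. 0 \<le> g y z"
    and g_poly: "\<And>y z. g y z \<le> Cg * (1 + \<bar>real_of_int y\<bar> + \<bar>real_of_int z\<bar>) ^ k"
  shows "(\<lambda>(y, z). weight f \<theta> y * weight f \<theta> z * (P y z + Q z y) * g y z) summable_on I \<times> I"
proof -
  interpret P: exchange_rate wmin wmax f P by (rule P)
  interpret Q: exchange_rate wmin wmax f Q by (rule Q)
  let ?W = "weight f \<theta>"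
  obtain a K where "0 < a" and W: "\<forall>y\<in>I. ?W y \<le> K * exp (- a * \<bar>real_of_int y\<bar>)"
    using weight_exp_bound assms(3,4) by blast
  let ?E = "\<lambda>y. exp (- a * \<bar>real_of_int y\<bar>)"
  obtain CP where CP: "\<forall>y\<in>I. \<forall>z\<in>I. ?W y * ?W z * P y z \<le> CP * (?E y * ?E z)"
    using P.weights_rate_exp_bound[OF less_imp_le[OF \<open>0 < a\<close>] W] by blast
  obtain CQ where CQ: "\<forall>y\<in>I. \<forall>z\<in>I. ?W y * ?W z * Q y z \<le> CQ * (?E y * ?E z)"
    using Q.weights_rate_exp_bound[OF less_imp_le[OF \<open>0 < a\<close>] W] by blast
  show ?thesis
  proof (rule summable_on_exp_decay_times_poly[OF \<open>0 < a\<close> _ g_nonneg g_poly])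
    fix y z assume y: "y \<in> I" and z: "z \<in> I"
    have "?W y * ?W z * (P y z + Q z y) = ?W y * ?W z * P y z + ?W z * ?W y * Q z y"
      by (simp add: algebra_simps)
    also have "\<dots> \<le> CP * (?E y * ?E z) + CQ * (?E z * ?E y)"
      using CP CQ y z by (intro add_mono) blast+
    also have "\<dots> = (CP + CQ) * (?E y * ?E z)"
      by (simp add: algebra_simps)
    finally show "0 \<le> ?W y * ?W z * (P y z + Q z y) \<and> ?W y * ?W z * (P y z + Q z y) \<le> (CP + CQ) * (?E y * ?E z)"
      using P.P_nonneg Q.P_nonneg weight_pos[OF y, of \<theta>] weight_pos[OF z, of \<theta>] y z by simp
  qed
qed

end

lemma exchange_of_factorization:
  fixes P s :: "int \<Rightarrow> int \<Rightarrow> 'a::comm_semiring_0" and f :: "int \<Rightarrow> 'a"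
  assumes "wmax = \<infinity> \<or> (\<exists>m::int. wmax = ereal (real_of_int m))"
    and factorization: "\<forall>y\<in>Iset wmin wmax. \<forall>z\<in>Iset wmin wmax.
      P y z = (if ereal (real_of_int (z + 1)) > wmax then 0 else s y (z + 1)) * f y"
    and s_sym: "\<forall>y\<in>Iset wmin wmax. \<forall>z\<in>Iset wmin wmax. s y z = s z y"
    and "y \<in> Iset wmin wmax" "z \<in> Iset wmin wmax" "y - 1 \<in> Iset wmin wmax" "z + 1 \<in> Iset wmin wmax"
  shows "P y z * f (z + 1) = f y * P (z + 1) (y - 1)"
proof -
  have "\<not> wmax < ereal (real_of_int (z + 1))" "\<not> wmax < ereal (real_of_int y)"
    using Iset_le_wmax[OF assms(1)] assms(4,7) by (simp_all only: not_less)
  then have "P y z = s y (z + 1) * f y" "P (z + 1) (y - 1) = s (z + 1) y * f (z + 1)"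
    using factorization assms(4-7) by simp_all
  moreover have "s (z + 1) y = s y (z + 1)" using s_sym assms(4,7) by blast
  ultimately show ?thesis by (simp add: mult_ac)
qed

theorem lemmaC2:
  fixes wmin wmax :: ereal
    and p q sp sq :: "int \<Rightarrow> int \<Rightarrow> real"
    and f :: "int \<Rightarrow> real"
    and thlow thup :: ereal
    and g :: "int \<Rightarrow> int \<Rightarrow> real"
    and \<theta> :: real
  assumes wmin_int: "wmin = -\<infinity> \<or> (\<exists>m::int. wmin = ereal (real_of_int m))"
    and wmax_int: "wmax = \<infinity> \<or> (\<exists>m::int. wmax = ereal (real_of_int m))"
    and wmin_le: "wmin \<le> 0" and wmax_ge: "1 \<le> wmax"
    \<comment> \<open>rates are nonnegative\<close>
    and p_nonneg: "\<forall>x\<in>Iset wmin wmax. \<forall>y\<in>Iset wmin wmax. p x y \<ge> 0"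
    and q_nonneg: "\<forall>x\<in>Iset wmin wmax. \<forall>y\<in>Iset wmin wmax. q x y \<ge> 0"
    \<comment> \<open>(R1)\<close>
    and R1_p_min: "\<forall>x\<in>Iset wmin wmax. \<forall>y\<in>Iset wmin wmax. ereal (real_of_int x) = wmin \<longrightarrow> p x y = 0"
    and R1_p_max: "\<forall>x\<in>Iset wmin wmax. \<forall>y\<in>Iset wmin wmax. ereal (real_of_int y) = wmax \<longrightarrow> p x y = 0"
    and R1_q_max: "\<forall>x\<in>Iset wmin wmax. \<forall>y\<in>Iset wmin wmax. ereal (real_of_int x) = wmax \<longrightarrow> q x y = 0"
    and R1_q_min: "\<forall>x\<in>Iset wmin wmax. \<forall>y\<in>Iset wmin wmax. ereal (real_of_int y) = wmin \<longrightarrow> q x y = 0"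
    and R1_pos:
      "(\<forall>x\<in>Iset wmin wmax. \<forall>y\<in>Iset wmin wmax.
          (ereal (real_of_int x) \<noteq> wmin \<and> ereal (real_of_int y) \<noteq> wmax \<longrightarrow> p x y > 0) \<and>
          (ereal (real_of_int x) \<noteq> wmax \<and> ereal (real_of_int y) \<noteq> wmin \<longrightarrow> q x y > 0))
       \<or> (\<forall>x\<in>Iset wmin wmax. \<forall>y\<in>Iset wmin wmax. p x y = 0)
       \<or> (\<forall>x\<in>Iset wmin wmax. \<forall>y\<in>Iset wmin wmax. q x y = 0)"
    \<comment> \<open>(R2)\<close>
    and R2: "\<forall>y\<in>Iset wmin wmax. \<forall>z\<in>Iset wmin wmax. z + 1 \<in> Iset wmin wmax \<longrightarrow>
        p (z+1) y \<ge> p z y \<and> p y (z+1) \<le> p y z \<and> q (z+1) y \<le> q z y \<and> q y (z+1) \<ge> q y z"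
    \<comment> \<open>(R3)\<close>
    and R3: "\<forall>x\<in>Iset wmin wmax. \<forall>y\<in>Iset wmin wmax. \<forall>z\<in>Iset wmin wmax.
        p x y + p y z + p z x + q x y + q y z + q z x = p x z + p z y + p y x + q x z + q z y + q y x"
    \<comment> \<open>(R4)\<close>
    and sp_sym: "\<forall>y\<in>Iset wmin wmax. \<forall>z\<in>Iset wmin wmax. sp y z = sp z y"
    and sq_sym: "\<forall>y\<in>Iset wmin wmax. \<forall>z\<in>Iset wmin wmax. sq y z = sq z y"
    and f_nonneg: "\<forall>z\<in>Iset wmin wmax. f z \<ge> 0"
    and f_min: "\<forall>z\<in>Iset wmin wmax. ereal (real_of_int z) = wmin \<longrightarrow> f z = 0"
    and f_pos: "\<forall>z\<in>Iset wmin wmax. ereal (real_of_int z) > wmin \<longrightarrow> f z > 0"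
    and p_fact: "\<forall>y\<in>Iset wmin wmax. \<forall>z\<in>Iset wmin wmax.
        p y z = (if ereal (real_of_int (z+1)) > wmax then 0 else sp y (z+1)) * f y"
    and q_fact: "\<forall>y\<in>Iset wmin wmax. \<forall>z\<in>Iset wmin wmax.
        q y z = (if ereal (real_of_int (y+1)) > wmax then 0 else sq (y+1) z) * f z"
    \<comment> \<open>theta bounds\<close>
    and thup_def: "if wmax = \<infinity> then ((\<lambda>n::nat. ereal (ln (f (int n)))) \<longlonglongrightarrow> thup) else thup = \<infinity>"
    and thlow_def: "if wmin = -\<infinity> then ((\<lambda>n::nat. ereal (ln (f (- int n)))) \<longlonglongrightarrow> thlow) else thlow = -\<infinity>"
    and th_lt: "thlow < thup"
    \<comment> \<open>g bounded by a polynomial in |y|, |z|\<close>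
    and g_nonneg: "\<forall>y z. g y z \<ge> 0"
    and g_poly: "\<exists>C::real. \<exists>k::nat. \<forall>y z. g y z \<le> C * (1 + \<bar>real_of_int y\<bar> + \<bar>real_of_int z\<bar>) ^ k"
    and theta: "thlow < ereal \<theta>" "ereal \<theta> < thup"
  shows "(\<lambda>(y, z). mu wmin wmax f \<theta> y * mu wmin wmax f \<theta> z * (p y z + q y z) * g y z)
           summable_on (Iset wmin wmax \<times> Iset wmin wmax)"
proof -
  interpret site_space wmin wmax f
    using wmin_le wmax_ge f_pos by unfold_locales
  have p: "exchange_rate wmin wmax f p"
    using p_nonneg R2 exchange_of_factorization[where s = sp, OF wmax_int p_fact sp_sym]
    by unfold_locales blast+
  have q_factorization: "\<forall>y\<in>I. \<forall>z\<in>I.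
      q z y = (if ereal (real_of_int (z + 1)) > wmax then 0 else sq (z + 1) y) * f y"
    using q_fact by blast
  have q: "exchange_rate wmin wmax f (\<lambda>y z. q z y)"
    using q_nonneg R2 exchange_of_factorization[where s = "\<lambda>y z. sq z y", OF wmax_int q_factorization] sq_sym
    by unfold_locales blast+
  obtain Cg k where "\<And>y z. g y z \<le> Cg * (1 + \<bar>real_of_int y\<bar> + \<bar>real_of_int z\<bar>) ^ k"
    using g_poly by blast
  then have "(\<lambda>(y, z). weight f \<theta> y * weight f \<theta> z * (p y z + q y z) * g y z) summable_on I \<times> I"
    using summable_on_weighted_rates[OF p q eventually_exp_le_f_at_top[OF thup_def theta(2)]
        eventually_f_le_exp_at_bot[OF thlow_def theta(1)]] g_nonneg by blast
  then show ?thesis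
    using summable_on_cmult_right[of _ "I \<times> I" "1 / Zpart wmin wmax f \<theta> ^ 2"]
    by (simp add: mu_eq_weight case_prod_unfold power2_eq_square mult_ac)
qed

end
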